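(* Let $\Omega\subset\mathbb{S}^m$ be a domain and $\rho\in C^1(\Omega)$. If the associated map $\phi^{\rho}:\Omega\to\mathbb{H}^{m+1}$ is proper, then for every $t\in\mathbb{R}$ the map $\phi_t:=\phi^{\rho+t}:\Omega\to\mathbb{H}^{m+1}$ (associated to $\rho+t$, i.e. to the dilated metric $e^{2t}e^{2\rho}g_0$) is also proper.
   Context: $\mathbb{S}^m\subset\mathbb{R}^{m+1}$ is the unit sphere with round metric $g_0$; $\nabla$ and $|\cdot|$ denote gradient and norm with respect to $g_0$. Let $\mathbb{L}^{m+2}$ be $\mathbb{R}^{m+2}$ with $\langle\!\langle x,y\rangle\!\rangle=-x_0y_0+\sum_{i=1}^{m+1}x_iy_i$, and $\mathbb{H}^{m+1}=\{x:\langle\!\langle x,x\rangle\!\rangle=-1,\ x_0>0\}$. For $\rho\in C^1(\Omega)$ the associated map $\phi^\rho:\Omega\to\mathbb{H}^{m+1}$ is $$\phi^\rho(x)=\frac{e^{\rho(x)}}{2}\Big(1+e^{-2\rho(x)}\big(1+|\nabla\rho(x)|^2\big)\Big)(1,x)+e^{-\rho(x)}\big(0,-x+\nabla\rho(x)\big).$$ (Equivalently $\phi^{\rho+t}=\cosh(t)\phi^\rho-\sinh(t)\eta$ with $\eta=\phi^\rho-e^{\rho}(1,x)$; this family is the parallel flow.) Proper means preimages of compact sets are compact. *)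

theory Defs
  imports "HOL-Analysis.Analysis"
begin

text \<open>The unit sphere S^m is sphere 0 1 in a Euclidean space 'a with DIM('a) = m+1.
  Minkowski space L^{m+2} is modelled as real \<times> 'a, with x = (x0, xbar).\<close>

definition lorentz :: "real \<times> 'a::euclidean_space \<Rightarrow> real \<times> 'a \<Rightarrow> real" where
  "lorentz x y = - fst x * fst y + snd x \<bullet> snd y"

definition hyperbolic :: "(real \<times> 'a::euclidean_space) set" where
  "hyperbolic = {x. lorentz x x = -1 \<and> fst x > 0}"

text \<open>Spherical (round-metric) gradient: the tangent vector v at x (v \<bullet> x = 0) representing
  the differential of rho at x along Omega.\<close>

definition is_sgrad :: "'a::euclidean_space set \<Rightarrow> ('a \<Rightarrow> real) \<Rightarrow> 'a \<Rightarrow> 'a \<Rightarrow> bool" where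
  "is_sgrad \<Omega> \<rho> x v \<longleftrightarrow> v \<bullet> x = 0 \<and> (\<rho> has_derivative (\<lambda>h. v \<bullet> h)) (at x within \<Omega>)"

definition sgrad :: "'a::euclidean_space set \<Rightarrow> ('a \<Rightarrow> real) \<Rightarrow> 'a \<Rightarrow> 'a" where
  "sgrad \<Omega> \<rho> x = (SOME v. is_sgrad \<Omega> \<rho> x v)"

definition sphere_C1 :: "'a::euclidean_space set \<Rightarrow> ('a \<Rightarrow> real) \<Rightarrow> bool" where
  "sphere_C1 \<Omega> \<rho> \<longleftrightarrow> (\<forall>x\<in>\<Omega>. \<exists>v. is_sgrad \<Omega> \<rho> x v) \<and> continuous_on \<Omega> (sgrad \<Omega> \<rho>)"

definition sphere_domain :: "'a::euclidean_space set \<Rightarrow> bool" where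
  "sphere_domain \<Omega> \<longleftrightarrow> \<Omega> \<subseteq> sphere 0 1 \<and> openin (top_of_set (sphere 0 1)) \<Omega> \<and> connected \<Omega> \<and> \<Omega> \<noteq> {}"

definition assoc_map :: "'a::euclidean_space set \<Rightarrow> ('a \<Rightarrow> real) \<Rightarrow> 'a \<Rightarrow> real \<times> 'a" where
  "assoc_map \<Omega> \<rho> x =
     (let g = sgrad \<Omega> \<rho> x;
          c = exp (\<rho> x) / 2 * (1 + exp (-2 * \<rho> x) * (1 + (norm g)\<^sup>2))
      in (c, c *\<^sub>R x + exp (- \<rho> x) *\<^sub>R (g - x)))"

definition proper_into_hyp :: "'a::euclidean_space set \<Rightarrow> ('a \<Rightarrow> real \<times> 'a) \<Rightarrow> bool" where
  "proper_into_hyp \<Omega> f \<longleftrightarrow>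
     (\<forall>K. K \<subseteq> hyperbolic \<and> compact K \<longrightarrow> compact {x \<in> \<Omega>. f x \<in> K})"

end

theory Submission
  imports Defs
begin

text \<open>Adding a constant t to \<rho> leaves the gradient unchanged, so the time coordinate of
  \<phi>^{\<rho>+t} is (e^t P + e^{-t} Q)/2 with P = e^\<rho> and Q = e^{-\<rho>}(1 + |\<nabla>\<rho>|^2) independent of t.
  Hence the time coordinate of \<phi>^\<rho> is at most e^{|t|} times that of \<phi>^{\<rho>+t}. On the
  hyperboloid the time coordinate is a proper function, so the preimage under \<phi>^{\<rho>+t} of a
  compact set is a closed subset of the preimage under \<phi>^\<rho> of a compact cap of the hyperboloid.\<close>

lemma is_sgrad_add_const: "is_sgrad \<Omega> (\<lambda>x. \<rho> x + t) x v \<longleftrightarrow> is_sgrad \<Omega> \<rho> x v"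
proof -
  have "(\<rho> has_derivative (\<lambda>h. v \<bullet> h)) (at x within \<Omega>)"
    if "((\<lambda>x. \<rho> x + t) has_derivative (\<lambda>h. v \<bullet> h)) (at x within \<Omega>)"
    using has_derivative_add_const[OF that, of "-t"] by simp
  then show ?thesis unfolding is_sgrad_def using has_derivative_add_const by blast
qed

lemma sgrad_add_const: "sgrad \<Omega> (\<lambda>x. \<rho> x + t) = sgrad \<Omega> \<rho>"
  unfolding sgrad_def[abs_def] is_sgrad_add_const by simp

lemma sphere_C1_is_sgrad:
  assumes "sphere_C1 \<Omega> \<rho>" "x \<in> \<Omega>"
  shows "is_sgrad \<Omega> \<rho> x (sgrad \<Omega> \<rho> x)"
proof -
  from assms obtain v where "is_sgrad \<Omega> \<rho> x v" unfolding sphere_C1_def by blast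
  then show ?thesis unfolding sgrad_def by (rule someI)
qed

lemma sphere_C1_continuous_on:
  assumes "sphere_C1 \<Omega> \<rho>"
  shows "continuous_on \<Omega> \<rho>"
proof -
  have "continuous (at x within \<Omega>) \<rho>" if "x \<in> \<Omega>" for x
    using sphere_C1_is_sgrad[OF assms that] unfolding is_sgrad_def
    by (rule has_derivative_continuous[OF conjunct2])
  then show ?thesis by (simp add: continuous_on_eq_continuous_within)
qed

lemma continuous_on_assoc_map:
  assumes "continuous_on \<Omega> \<rho>" "continuous_on \<Omega> (sgrad \<Omega> \<rho>)"
  shows "continuous_on \<Omega> (assoc_map \<Omega> \<rho>)"
  unfolding assoc_map_def[abs_def] Let_def
  by (intro continuous_intros assms) simp_all

lemma assoc_map_in_hyperbolic:
  fixes x :: "'a::euclidean_space"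
  assumes "norm x = 1" "sgrad \<Omega> \<rho> x \<bullet> x = 0"
  shows "assoc_map \<Omega> \<rho> x \<in> hyperbolic"
proof -
  define g where "g = sgrad \<Omega> \<rho> x"
  define a where "a = exp (\<rho> x)"
  define b where "b = exp (- \<rho> x)"
  define c where "c = (a + b * (1 + (norm g)\<^sup>2)) / 2"
  have ab: "a * b = 1" unfolding a_def b_def by (simp add: exp_minus)
  have "exp (-2 * \<rho> x) = b * b"
    by (simp add: b_def flip: exp_add)
  then have "exp (\<rho> x) / 2 * (1 + exp (-2 * \<rho> x) * (1 + (norm g)\<^sup>2))
      = (a + (a * b) * b * (1 + (norm g)\<^sup>2)) / 2"
    by (simp add: a_def algebra_simps)
  then have "exp (\<rho> x) / 2 * (1 + exp (-2 * \<rho> x) * (1 + (norm g)\<^sup>2)) = c"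
    by (simp add: ab c_def)
  then have \<phi>: "assoc_map \<Omega> \<rho> x = (c, (c - b) *\<^sub>R x + b *\<^sub>R g)"
    unfolding assoc_map_def Let_def g_def[symmetric] b_def[symmetric]
    by (simp add: algebra_simps)
  have "x \<bullet> x = 1" "x \<bullet> g = 0"
    using assms by (simp_all add: dot_square_norm inner_commute g_def)
  moreover have "g \<bullet> g = (norm g)\<^sup>2"
    by (simp add: dot_square_norm)
  ultimately have snd_sq: "snd (assoc_map \<Omega> \<rho> x) \<bullet> snd (assoc_map \<Omega> \<rho> x) = (c - b)\<^sup>2 + b\<^sup>2 * (norm g)\<^sup>2"
    unfolding \<phi> by (simp add: inner_add_left inner_add_right inner_commute power2_eq_square algebra_simps)
  have fst_c: "fst (assoc_map \<Omega> \<rho> x) = c"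
    by (simp add: \<phi>)
  have "lorentz (assoc_map \<Omega> \<rho> x) (assoc_map \<Omega> \<rho> x) = - c\<^sup>2 + ((c - b)\<^sup>2 + b\<^sup>2 * (norm g)\<^sup>2)"
    unfolding lorentz_def fst_c snd_sq by (simp add: power2_eq_square)
  also have "\<dots> = b * (b * (1 + (norm g)\<^sup>2) - 2 * c)"
    by (simp add: power2_eq_square algebra_simps)
  also have "\<dots> = -1"
    using ab by (simp add: c_def algebra_simps)
  finally show ?thesis
    unfolding hyperbolic_def using \<phi> by (simp add: c_def a_def b_def add_pos_nonneg)
qed

lemma add_le_exp_abs_mult:
  fixes P Q t :: real
  assumes "P \<ge> 0" "Q \<ge> 0"
  shows "(P + Q) / 2 \<le> exp \<bar>t\<bar> * ((P * exp t + Q * exp (-t)) / 2)"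
proof -
  have "1 \<le> exp \<bar>t\<bar> * exp t" "1 \<le> exp \<bar>t\<bar> * exp (-t)"
    by (simp_all flip: exp_add)
  then have "P \<le> P * (exp \<bar>t\<bar> * exp t)" "Q \<le> Q * (exp \<bar>t\<bar> * exp (-t))"
    using assms mult_left_mono[of 1 _ P] mult_left_mono[of 1 _ Q] by simp_all
  then show ?thesis by (simp add: algebra_simps)
qed

lemma fst_assoc_map_le_add_const:
  "fst (assoc_map \<Omega> \<rho> x) \<le> exp \<bar>t\<bar> * fst (assoc_map \<Omega> (\<lambda>x. \<rho> x + t) x)"
proof -
  define P where "P = exp (\<rho> x)"
  define Q where "Q = exp (- \<rho> x) * (1 + (norm (sgrad \<Omega> \<rho> x))\<^sup>2)"
  have "fst (assoc_map \<Omega> \<rho> x) = (P + Q) / 2"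
    unfolding assoc_map_def Let_def by (simp add: P_def Q_def field_simps flip: exp_add)
  moreover have "fst (assoc_map \<Omega> (\<lambda>x. \<rho> x + t) x) = (P * exp t + Q * exp (-t)) / 2"
    unfolding assoc_map_def Let_def sgrad_add_const
    by (simp add: P_def Q_def field_simps flip: exp_add)
  moreover have "(P + Q) / 2 \<le> exp \<bar>t\<bar> * ((P * exp t + Q * exp (-t)) / 2)"
    by (rule add_le_exp_abs_mult) (simp_all add: P_def Q_def)
  ultimately show ?thesis by (simp only:)
qed

lemma compact_hyperbolic_cap: "compact {y::real \<times> 'a::euclidean_space. y \<in> hyperbolic \<and> fst y \<le> R}"
  (is "compact ?cap")
proof (rule compact_eq_bounded_closed[THEN iffD2], rule conjI)
  have norm_snd: "norm (snd y) \<le> fst y" if "y \<in> hyperbolic" for y :: "real \<times> 'a"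
  proof (rule power2_le_imp_le)
    have "(norm (snd y))\<^sup>2 = snd y \<bullet> snd y"
      by (simp add: power2_norm_eq_inner)
    also have "\<dots> = (fst y)\<^sup>2 - 1"
      using that by (simp add: hyperbolic_def lorentz_def power2_eq_square)
    finally show "(norm (snd y))\<^sup>2 \<le> (fst y)\<^sup>2"
      by simp
    show "0 \<le> fst y"
      using that by (simp add: hyperbolic_def)
  qed
  show "bounded ?cap"
    unfolding bounded_iff
  proof (intro exI[of _ "2 * \<bar>R\<bar>"] ballI)
    fix y assume "y \<in> ?cap"
    with norm_snd have "norm (snd y) \<le> fst y" "0 < fst y" "fst y \<le> R"
      by (auto simp: hyperbolic_def)
    then show "norm y \<le> 2 * \<bar>R\<bar>"
      using norm_Pair_le[of "fst y" "snd y"] by simp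
  qed
  have "fst y > 0" if "lorentz y y = -1" "fst y \<ge> 0" for y :: "real \<times> 'a"
  proof -
    have "fst y * fst y = 1 + snd y \<bullet> snd y"
      using that by (simp add: lorentz_def)
    then have "fst y * fst y \<ge> 1"
      using inner_ge_zero[of "snd y"] by linarith
    then show ?thesis
      using that(2) by (cases "fst y = 0") auto
  qed
  then have "?cap = {y. lorentz y y = -1} \<inter> {y. fst y \<ge> 0} \<inter> {y. fst y \<le> R}"
    by (auto simp: hyperbolic_def)
  then show "closed ?cap"
    unfolding lorentz_def by (simp only:) (intro closed_Int closed_Collect_eq closed_Collect_le continuous_intros)
qed

lemma proper_into_hyp_if_fst_dominated:
  fixes f g :: "'a::euclidean_space \<Rightarrow> real \<times> 'a"
  assumes proper: "proper_into_hyp \<Omega> g"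
    and cont: "continuous_on \<Omega> f"
    and hyp: "g ` \<Omega> \<subseteq> hyperbolic"
    and dom: "\<And>x. x \<in> \<Omega> \<Longrightarrow> fst (g x) \<le> c * fst (f x)"
    and "c \<ge> 0"
  shows "proper_into_hyp \<Omega> f"
  unfolding proper_into_hyp_def
proof (intro allI impI)
  fix K :: "(real \<times> 'a) set"
  assume K: "K \<subseteq> hyperbolic \<and> compact K"
  then obtain B where B: "\<And>k. k \<in> K \<Longrightarrow> norm k \<le> B"
    by (meson bounded_iff compact_imp_bounded)
  define C where "C = {x \<in> \<Omega>. g x \<in> {y. y \<in> hyperbolic \<and> fst y \<le> c * B}}"
  have "compact C"
    unfolding C_def
    by (rule proper[unfolded proper_into_hyp_def, rule_format]) (auto intro: compact_hyperbolic_cap)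
  have preimage_sub: "{x \<in> \<Omega>. f x \<in> K} \<subseteq> C"
  proof
    fix x assume x: "x \<in> {x \<in> \<Omega>. f x \<in> K}"
    have "fst (g x) \<le> c * fst (f x)"
      using x by (simp add: dom)
    also have "\<dots> \<le> c * norm (f x)"
      using norm_fst_le[of "fst (f x)" "snd (f x)"] \<open>c \<ge> 0\<close> by (simp add: mult_left_mono)
    also have "\<dots> \<le> c * B"
      using B x \<open>c \<ge> 0\<close> by (simp add: mult_left_mono)
    finally show "x \<in> C"
      using x hyp by (auto simp: C_def)
  qed
  have "closedin (top_of_set \<Omega>) {x \<in> \<Omega>. f x \<in> K}"
    using continuous_closedin_preimage[OF cont compact_imp_closed[of K]] K
    by (simp add: vimage_def Int_def)
  moreover have "C \<subseteq> \<Omega>"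
    by (auto simp: C_def)
  ultimately have "closedin (top_of_set C) {x \<in> \<Omega>. f x \<in> K}"
    by (rule closedin_subset_trans[OF _ preimage_sub])
  then show "compact {x \<in> \<Omega>. f x \<in> K}"
    using \<open>compact C\<close> by (rule closedin_compact[rotated])
qed

theorem mainTheorem4:
  fixes \<Omega> :: "'a::euclidean_space set" and \<rho> :: "'a \<Rightarrow> real"
  assumes "DIM('a) \<ge> 2"
    and "sphere_domain \<Omega>"
    and "sphere_C1 \<Omega> \<rho>"
    and "proper_into_hyp \<Omega> (assoc_map \<Omega> \<rho>)"
  shows "\<forall>t::real. proper_into_hyp \<Omega> (assoc_map \<Omega> (\<lambda>x. \<rho> x + t))"
proof
  fix t :: real
  have "continuous_on \<Omega> (\<lambda>x. \<rho> x + t)"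
    using sphere_C1_continuous_on[OF assms(3)] by (intro continuous_intros)
  then have "continuous_on \<Omega> (assoc_map \<Omega> (\<lambda>x. \<rho> x + t))"
    by (rule continuous_on_assoc_map) (use assms(3) in \<open>simp add: sgrad_add_const sphere_C1_def\<close>)
  moreover have "assoc_map \<Omega> \<rho> ` \<Omega> \<subseteq> hyperbolic"
  proof -
    have "norm x = 1" "sgrad \<Omega> \<rho> x \<bullet> x = 0" if "x \<in> \<Omega>" for x
      using assms(2,3) that sphere_C1_is_sgrad by (auto simp: sphere_domain_def is_sgrad_def)
    then show ?thesis using assoc_map_in_hyperbolic by blast
  qed
  ultimately show "proper_into_hyp \<Omega> (assoc_map \<Omega> (\<lambda>x. \<rho> x + t))"
    by (rule proper_into_hyp_if_fst_dominated[OF assms(4) _ _ fst_assoc_map_le_add_const exp_ge_zero])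
qed

end
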